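(* Let $c_p\ge 1$ be an integer, let $k\ge 1$, and for each $1\le i\le k$ let $\gamma_i>0$ be a real constant, let $f_i(\alpha)$ be a pseudo-polynomial in $\alpha$, and let $g_i(n)$ be a pseudo-polynomial in $n$ in which every monomial $c\cdot n^{a}\ln^{b} n$ has $a\ge 0$ and $b\ge 0$. Put $$Q_L(\alpha,n):=\sum_{i=1}^{k}\gamma_i\cdot \exp\big(f_i(\alpha)+g_i(n)\big),$$ and consider the canonical constraint $$Q:\quad \exists \alpha_0\ \forall \alpha\ge \alpha_0\ \forall \text{ integers } n\ge c_p:\ Q_L(\alpha,n)\le 1 .$$ Run the procedure $\mathsf{Decide}$ (described in the context) on this input. Then: (1) (Completeness) If for arbitrarily large $\alpha$ there exists an integer $n\ge c_p$ with $Q_L(\alpha,n)>1$ (i.e. $Q$ does not hold), then $\mathsf{Decide}$ returns False. (2) (Soundness) For every $\varepsilon>0$: if there is $\alpha_0$ such that $Q_L(\alpha,n)\le 1-\varepsilon$ for all $\alpha\ge\alpha_0$ and all integers $n\ge c_p$, then $\mathsf{Decide}$ returns True.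
   Context: A pseudo-polynomial in a variable $x$ is a finite sum $\sum_j c_j\, x^{a_j}\ln^{b_j}x$ with real coefficients $c_j$ and integer exponents $a_j,b_j$ (considered for sufficiently large real $x$); limits as $x\to\infty$ are taken in $\mathbb{R}\cup\{\pm\infty\}$, with $\exp(-\infty)=0$. The procedure uses an oracle $\mathsf{NegativeLB}(P)$ that, given a pseudo-polynomial $P(n)$ for which such an integer exists, returns an integer $T^*$ such that $P(n)\le 0$ for every real $n\ge T^*$. Procedure $\mathsf{Decide}$: Step 1: set $T:=c_p$. For $i=1,\dots,k$: compute $M_i=\lim_{n\to\infty} g_i(n)$; if $M_i=+\infty$ return False; otherwise let $g_i'$ be the derivative of $g_i$ and set $T:=\max\{T,\mathsf{NegativeLB}(g_i')\}$. Step 2: for each integer $\bar n$ with $c_p\le \bar n\le T$: set $R:=0$; for $i=1,\dots,k$: compute $\Delta=\lim_{\alpha\to\infty}\big(f_i(\alpha)+g_i(\bar n)\big)$; if $\Delta=+\infty$ return False; otherwise set $R:=R+\gamma_i\exp(\Delta)$, and if $R\ge 1$ return False. Step 3: return True. *)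

theory Defs
  imports "HOL-Analysis.Analysis"
begin

text \<open>A pseudo-polynomial is represented as a finite list of monomials (c, a, b),
  standing for the sum of the terms c * x^a * (ln x)^b, with real c and integer a, b.\<close>
type_synonym pp = "(real \<times> int \<times> int) list"

definition pp_eval :: "pp \<Rightarrow> real \<Rightarrow> real" where
  "pp_eval P x = (\<Sum>(c, a, b) \<leftarrow> P. c * x powi a * (ln x) powi b)"

text \<open>Formal derivative of a pseudo-polynomial:
  d/dx (c x^a ln^b x) = c a x^(a-1) ln^b x + c b x^(a-1) ln^(b-1) x.\<close>
definition pp_deriv :: "pp \<Rightarrow> pp" where
  "pp_deriv P = concat (map (\<lambda>(c, a, b). [(c * of_int a, a - 1, b), (c * of_int b, a - 1, b - 1)]) P)"

definition lim_top :: "(real \<Rightarrow> real) \<Rightarrow> ereal" where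
  "lim_top h = Lim at_top (\<lambda>x. ereal (h x))"

text \<open>exp on extended reals with exp(-\<infinity>) = 0 (only used for values \<noteq> +\<infinity>).\<close>
definition ereal_exp :: "ereal \<Rightarrow> real" where
  "ereal_exp d = (case d of ereal r \<Rightarrow> exp r | _ \<Rightarrow> 0)"

definition negativeLB_spec :: "(pp \<Rightarrow> int) \<Rightarrow> bool" where
  "negativeLB_spec NLB \<longleftrightarrow>
     (\<forall>P. (\<exists>T::int. \<forall>x::real. x \<ge> real_of_int T \<longrightarrow> pp_eval P x \<le> 0)
          \<longrightarrow> (\<forall>x::real. x \<ge> real_of_int (NLB P) \<longrightarrow> pp_eval P x \<le> 0))"

text \<open>Input: list of triples (gamma_i, f_i, g_i), i = 1..k.
  Step 1: None = "return False", Some T = final value of T.\<close>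
fun decide_step1 :: "(pp \<Rightarrow> int) \<Rightarrow> int \<Rightarrow> (real \<times> pp \<times> pp) list \<Rightarrow> int option" where
  "decide_step1 NLB T [] = Some T"
| "decide_step1 NLB T ((\<gamma>, f, g) # rest) =
     (if lim_top (pp_eval g) = \<infinity> then None
      else decide_step1 NLB (max T (NLB (pp_deriv g))) rest)"

text \<open>Inner loop of Step 2 for a fixed nbar with accumulator R; False = "return False".\<close>
fun decide_inner :: "int \<Rightarrow> real \<Rightarrow> (real \<times> pp \<times> pp) list \<Rightarrow> bool" where
  "decide_inner nb R [] = True"
| "decide_inner nb R ((\<gamma>, f, g) # rest) =
     (let \<Delta> = lim_top (\<lambda>\<alpha>. pp_eval f \<alpha> + pp_eval g (real_of_int nb)) in
      if \<Delta> = \<infinity> then False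
      else (let R' = R + \<gamma> * ereal_exp \<Delta> in
            if R' \<ge> 1 then False else decide_inner nb R' rest))"

definition Decide :: "(pp \<Rightarrow> int) \<Rightarrow> int \<Rightarrow> (real \<times> pp \<times> pp) list \<Rightarrow> bool" where
  "Decide NLB cp inp =
     (case decide_step1 NLB cp inp of
        None \<Rightarrow> False
      | Some T \<Rightarrow> (\<forall>nb \<in> {cp..T}. decide_inner nb 0 inp))"

definition QL :: "(real \<times> pp \<times> pp) list \<Rightarrow> real \<Rightarrow> int \<Rightarrow> real" where
  "QL inp \<alpha> n = (\<Sum>(\<gamma>, f, g) \<leftarrow> inp. \<gamma> * exp (pp_eval f \<alpha> + pp_eval g (real_of_int n)))"

end

theory Submission
  imports Defs "HOL-Real_Asymp.Real_Asymp"
begin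

text \<open>
  A pseudo-polynomial is dominated at infinity by its lexicographically largest monomial
  \<open>x^a ln^b x\<close>, so it has a limit in the extended reals and is eventually of constant sign.
  If \<open>g\<close> has only nonnegative exponents it is constant or tends to \<open>\<plusminus>\<infinity>\<close>; hence, when its limit is
  not \<open>+\<infinity>\<close>, \<open>g'\<close> cannot be eventually positive, NegativeLB applies to \<open>g'\<close>, and every \<open>g\<^sub>i\<close> is
  nonincreasing beyond the threshold \<open>T\<close> of Step 1. So \<open>Q\<^sub>L(\<alpha>, n) \<le> Q\<^sub>L(\<alpha>, min n T)\<close>, and for the
  finitely many \<open>n \<in> [c\<^sub>p, T]\<close> Step 2 computes exactly the limits \<open>\<Sum> \<gamma>\<^sub>i exp \<Delta>\<^sub>i\<close> of \<open>Q\<^sub>L(\<alpha>, n)\<close>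
  as \<open>\<alpha> \<rightarrow> \<infinity>\<close>. Conversely, if \<open>Q\<^sub>L \<le> 1 - \<epsilon>\<close> eventually, no limit computed in either step can be
  \<open>+\<infinity>\<close>, since a single summand would then exceed 1.
\<close>

definition pp_monom :: "int \<times> int \<Rightarrow> real \<Rightarrow> real" where
  "pp_monom p x = x powi fst p * ln x powi snd p"

definition pp_coeff :: "pp \<Rightarrow> int \<times> int \<Rightarrow> real" where
  "pp_coeff P p = (\<Sum>(c, q) \<leftarrow> P. if q = p then c else 0)"

definition pp_support :: "pp \<Rightarrow> (int \<times> int) set" where
  "pp_support P = {p \<in> snd ` set P. pp_coeff P p \<noteq> 0}"

lemma finite_pp_support [simp]: "finite (pp_support P)"
  by (simp add: pp_support_def)

lemma pp_eval_eq_sum_coeff: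
  assumes "finite A" "snd ` set P \<subseteq> A"
  shows "pp_eval P x = (\<Sum>p\<in>A. pp_coeff P p * pp_monom p x)"
  using assms(2)
proof (induction P)
  case Nil
  then show ?case by (simp add: pp_eval_def pp_coeff_def)
next
  case (Cons m P)
  obtain c q where m: "m = (c, q)" by (cases m)
  have "(\<Sum>p\<in>A. (if q = p then c else 0) * pp_monom p x)
      = (\<Sum>p\<in>A. if q = p then c * pp_monom p x else 0)"
    by (rule sum.cong) auto
  also have "\<dots> = c * pp_monom q x"
    using Cons.prems m assms(1) by simp
  finally have "(\<Sum>p\<in>A. (if q = p then c else 0) * pp_monom p x) = c * pp_monom q x" .
  moreover have "pp_eval (m # P) x = c * pp_monom q x + pp_eval P x"
    by (cases q) (simp add: m pp_eval_def pp_monom_def mult.assoc)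
  ultimately show ?case
    using Cons by (simp add: m pp_coeff_def distrib_right sum.distrib)
qed

lemma pp_eval_eq_sum_support: "pp_eval P x = (\<Sum>p\<in>pp_support P. pp_coeff P p * pp_monom p x)"
proof -
  have "pp_eval P x = (\<Sum>p\<in>snd ` set P. pp_coeff P p * pp_monom p x)"
    by (rule pp_eval_eq_sum_coeff) auto
  also have "\<dots> = (\<Sum>p\<in>pp_support P. pp_coeff P p * pp_monom p x)"
    by (rule sum.mono_neutral_right) (auto simp: pp_support_def)
  finally show ?thesis .
qed

definition lex_less :: "int \<times> int \<Rightarrow> int \<times> int \<Rightarrow> bool" where
  "lex_less p q \<longleftrightarrow> fst p < fst q \<or> (fst p = fst q \<and> snd p < snd q)"

lemma lex_less_trichotomy: "lex_less p q \<or> p = q \<or> lex_less q p"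
  by (cases p; cases q) (auto simp: lex_less_def)

lemma pp_monom_eq_powr: "x > 1 \<Longrightarrow> pp_monom p x = x powr fst p * ln x powr snd p"
  by (simp add: pp_monom_def powr_real_of_int')

lemma pp_monom_pos: "x > 1 \<Longrightarrow> pp_monom p x > 0"
  by (simp add: pp_monom_eq_powr)

lemma eventually_pp_monom_pos: "eventually (\<lambda>x. pp_monom p x > 0) at_top"
  using eventually_gt_at_top[of 1] by eventually_elim (rule pp_monom_pos)

lemma pp_monom_ratio_tendsto_0:
  assumes "lex_less p q"
  shows "((\<lambda>x. pp_monom p x / pp_monom q x) \<longlongrightarrow> 0) at_top"
proof -
  define r s where "r = real_of_int (fst p - fst q)" and "s = real_of_int (snd p - snd q)"
  have "eventually (\<lambda>x. x powr r * ln x powr s = pp_monom p x / pp_monom q x) at_top"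
    using eventually_gt_at_top[of 1]
    by eventually_elim (simp add: r_def s_def pp_monom_eq_powr powr_diff)
  moreover have "((\<lambda>x. x powr r * ln x powr s) \<longlongrightarrow> 0) at_top"
  proof (cases "r < 0")
    case True
    then show ?thesis by real_asymp
  next
    case False
    then have "r = 0" "s < 0"
      using assms by (auto simp: r_def s_def lex_less_def)
    then show ?thesis by real_asymp
  qed
  ultimately show ?thesis by (rule Lim_transform_eventually[rotated])
qed

lemma pp_monom_zero [simp]: "pp_monom (0, 0) x = 1"
  by (simp add: pp_monom_def)

lemma pp_monom_tendsto_0: "lex_less p (0, 0) \<Longrightarrow> (pp_monom p \<longlongrightarrow> 0) at_top"
  using pp_monom_ratio_tendsto_0[of p "(0, 0)"] by simp

lemma pp_monom_tendsto_at_top: "lex_less (0, 0) p \<Longrightarrow> filterlim (pp_monom p) at_top at_top"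
  using filterlim_inverse_at_top[OF pp_monom_ratio_tendsto_0[of "(0, 0)" p]]
    eventually_pp_monom_pos[of p]
  by (simp add: inverse_eq_divide)

definition pp_lead :: "pp \<Rightarrow> int \<times> int" where
  "pp_lead P = (let a = Max (fst ` pp_support P) in (a, Max (snd ` {p \<in> pp_support P. fst p = a})))"

lemma
  assumes "pp_support P \<noteq> {}"
  shows pp_lead_in_support: "pp_lead P \<in> pp_support P"
    and lex_less_pp_lead: "\<And>p. p \<in> pp_support P \<Longrightarrow> p \<noteq> pp_lead P \<Longrightarrow> lex_less p (pp_lead P)"
proof -
  define a where "a = Max (fst ` pp_support P)"
  define B where "B = {p \<in> pp_support P. fst p = a}"
  have lead: "pp_lead P = (a, Max (snd ` B))"
    by (simp add: pp_lead_def a_def B_def Let_def)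
  have "a \<in> fst ` pp_support P"
    using assms by (simp add: a_def)
  then have "B \<noteq> {}" "finite B"
    by (auto simp: B_def)
  then have "Max (snd ` B) \<in> snd ` B"
    by simp
  then show "pp_lead P \<in> pp_support P"
    by (auto simp: lead B_def)
  fix p assume p: "p \<in> pp_support P" "p \<noteq> pp_lead P"
  have "fst p \<le> a"
    using p(1) by (simp add: a_def)
  moreover have "snd p \<le> Max (snd ` B)" if "fst p = a"
    using p(1) that \<open>finite B\<close> by (auto simp: B_def)
  ultimately show "lex_less p (pp_lead P)"
    using p(2) by (cases p) (auto simp: lead lex_less_def)
qed

lemma pp_eval_over_lead_tendsto:
  assumes "pp_support P \<noteq> {}"
  shows "((\<lambda>x. pp_eval P x / pp_monom (pp_lead P) x) \<longlongrightarrow> pp_coeff P (pp_lead P)) at_top"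
proof -
  let ?q = "pp_lead P" and ?S = "pp_support P - {pp_lead P}"
  have "eventually (\<lambda>x. pp_coeff P ?q + (\<Sum>p\<in>?S. pp_coeff P p * (pp_monom p x / pp_monom ?q x))
      = pp_eval P x / pp_monom ?q x) at_top"
    using eventually_pp_monom_pos[of ?q]
  proof eventually_elim
    case (elim x)
    have "pp_eval P x = pp_coeff P ?q * pp_monom ?q x + (\<Sum>p\<in>?S. pp_coeff P p * pp_monom p x)"
      using pp_lead_in_support[OF assms] by (simp add: pp_eval_eq_sum_support sum.remove)
    then show ?case
      using elim by (simp add: add_divide_distrib sum_divide_distrib)
  qed
  moreover have "((\<lambda>x. pp_coeff P ?q + (\<Sum>p\<in>?S. pp_coeff P p * (pp_monom p x / pp_monom ?q x)))
      \<longlongrightarrow> pp_coeff P ?q + 0) at_top"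
    using lex_less_pp_lead[OF assms]
    by (intro tendsto_add tendsto_const tendsto_null_sum tendsto_mult_right_zero
        pp_monom_ratio_tendsto_0) auto
  ultimately show ?thesis
    by (simp add: Lim_transform_eventually)
qed

lemma pp_coeff_lead_nonzero: "pp_support P \<noteq> {} \<Longrightarrow> pp_coeff P (pp_lead P) \<noteq> 0"
  using pp_lead_in_support by (auto simp: pp_support_def)

lemma pp_eval_eventually_sign:
  "(\<forall>x. pp_eval P x = 0) \<or> eventually (\<lambda>x. pp_eval P x > 0) at_top
     \<or> eventually (\<lambda>x. pp_eval P x < 0) at_top"
proof (cases "pp_support P = {}")
  case True
  then show ?thesis by (simp add: pp_eval_eq_sum_support)
next
  case False
  let ?q = "pp_lead P" and ?c = "pp_coeff P (pp_lead P)"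
  note lim = pp_eval_over_lead_tendsto[OF False]
  have pos: "eventually (\<lambda>x. pp_monom ?q x > 0) at_top"
    by (rule eventually_pp_monom_pos)
  consider "?c > 0" | "?c < 0"
    using pp_coeff_lead_nonzero[OF False] by linarith
  then show ?thesis
  proof cases
    case 1
    have "eventually (\<lambda>x. pp_eval P x > 0) at_top"
      using pos order_tendstoD(1)[OF lim 1]
      by eventually_elim (simp add: zero_less_divide_iff)
    then show ?thesis by simp
  next
    case 2
    have "eventually (\<lambda>x. pp_eval P x < 0) at_top"
      using pos order_tendstoD(2)[OF lim 2]
      by eventually_elim (simp add: divide_less_0_iff)
    then show ?thesis by simp
  qed
qed

lemma pp_eval_tendsto_infinity:
  assumes "pp_support P \<noteq> {}" "lex_less (0, 0) (pp_lead P)"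
  shows "filterlim (pp_eval P) at_top at_top \<or> filterlim (pp_eval P) at_bot at_top"
proof -
  let ?q = "pp_lead P" and ?c = "pp_coeff P (pp_lead P)"
  note lim = pp_eval_over_lead_tendsto[OF assms(1)]
  note big = pp_monom_tendsto_at_top[OF assms(2)]
  have eq: "eventually (\<lambda>x. pp_eval P x / pp_monom ?q x * pp_monom ?q x = pp_eval P x) at_top"
    using eventually_pp_monom_pos[of ?q] by eventually_elim simp
  consider "?c > 0" | "?c < 0"
    using pp_coeff_lead_nonzero[OF assms(1)] by linarith
  then show ?thesis
  proof cases
    case 1
    show ?thesis
      using filterlim_tendsto_pos_mult_at_top[OF lim 1 big] filterlim_cong[OF refl refl eq] by simp
  next
    case 2
    show ?thesis
      using filterlim_tendsto_neg_mult_at_bot[OF lim 2 big] filterlim_cong[OF refl refl eq] by simp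
  qed
qed

lemma lim_top_eqI: "((\<lambda>x. ereal (h x)) \<longlongrightarrow> l) at_top \<Longrightarrow> lim_top h = l"
  unfolding lim_top_def by (rule tendsto_Lim) simp

lemmas ereal_tendsto_infinity_iff = ereal_tendsto_simps2(2,3)[unfolded comp_def]

lemma pp_eval_tendsto_lim_top: "((\<lambda>x. ereal (pp_eval P x)) \<longlongrightarrow> lim_top (pp_eval P)) at_top"
proof -
  have "\<exists>l. ((\<lambda>x. ereal (pp_eval P x)) \<longlongrightarrow> l) at_top"
  proof (cases "pp_support P = {}")
    case True
    then show ?thesis by (auto simp: pp_eval_eq_sum_support)
  next
    case nonempty: False
    let ?q = "pp_lead P" and ?c = "pp_coeff P (pp_lead P)"
    note lim = pp_eval_over_lead_tendsto[OF nonempty]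
    consider "lex_less (0, 0) ?q" | "?q = (0, 0)" | "lex_less ?q (0, 0)"
      using lex_less_trichotomy by blast
    then show ?thesis
    proof cases
      case 1
      then show ?thesis
        using pp_eval_tendsto_infinity[OF nonempty] ereal_tendsto_infinity_iff by blast
    next
      case 2
      then show ?thesis
        using lim by (auto intro: lim_ereal[THEN iffD2])
    next
      case 3
      have "((\<lambda>x. pp_monom ?q x * (pp_eval P x / pp_monom ?q x)) \<longlongrightarrow> 0 * ?c) at_top"
        by (intro tendsto_mult pp_monom_tendsto_0[OF 3] lim)
      moreover have "eventually (\<lambda>x. pp_monom ?q x * (pp_eval P x / pp_monom ?q x) = pp_eval P x) at_top"
        using eventually_pp_monom_pos[of ?q] by eventually_elim simp
      ultimately have "(pp_eval P \<longlongrightarrow> 0) at_top"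
        by (simp add: Lim_transform_eventually)
      then show ?thesis
        by (auto intro: lim_ereal[THEN iffD2])
    qed
  qed
  then show ?thesis
    using lim_top_eqI by metis
qed

lemma pp_eval_nonneg_exponents_cases:
  assumes "\<forall>(c, a, b) \<in> set P. 0 \<le> a \<and> 0 \<le> b"
  shows "(\<exists>C. \<forall>x. pp_eval P x = C) \<or> filterlim (pp_eval P) at_top at_top
    \<or> filterlim (pp_eval P) at_bot at_top"
proof (cases "pp_support P = {}")
  case True
  then show ?thesis by (simp add: pp_eval_eq_sum_support)
next
  case nonempty: False
  have nonneg: "0 \<le> fst p \<and> 0 \<le> snd p" if "p \<in> pp_support P" for p
    using that assms by (auto simp: pp_support_def)
  show ?thesis
  proof (cases "pp_lead P = (0, 0)")
    case True
    have "p = (0, 0)" if "p \<in> pp_support P" for p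
      using lex_less_pp_lead[OF nonempty that] nonneg[OF that] True
      by (cases "p = pp_lead P") (auto simp: lex_less_def)
    then have "pp_support P \<subseteq> {(0, 0)}"
      by blast
    then have "pp_support P = {(0, 0)}"
      using nonempty by (simp add: subset_singleton_iff)
    then show ?thesis by (simp add: pp_eval_eq_sum_support)
  next
    case False
    then have "lex_less (0, 0) (pp_lead P)"
      using nonneg[OF pp_lead_in_support[OF nonempty]]
      by (cases "pp_lead P") (auto simp: lex_less_def)
    then show ?thesis
      using pp_eval_tendsto_infinity[OF nonempty] by blast
  qed
qed

text \<open>At \<open>x = 1\<close> a factor \<open>ln x powi b\<close> with \<open>b < 0\<close> is the junk value \<open>0 powi b = 0\<close>.\<close>

lemma has_real_derivative_pp_eval:
  assumes "0 < x" "x \<noteq> 1 \<or> (\<forall>(c, a, b) \<in> set P. 0 \<le> b)"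
  shows "(pp_eval P has_real_derivative pp_eval (pp_deriv P) x) (at x)"
  using assms(2)
proof (induction P)
  case Nil
  then show ?case by (simp add: pp_eval_def pp_deriv_def)
next
  case (Cons m P)
  obtain c a b where m: "m = (c, a, b)" by (cases m)
  have "0 \<le> b \<or> ln x \<noteq> 0"
    using Cons.prems assms(1) m by auto
  moreover have "x powi (a - 1) = x powi a / x"
    using assms(1) by (simp add: power_int_diff)
  ultimately have "((\<lambda>x. c * (x powi a * ln x powi b)) has_real_derivative
      c * of_int a * x powi (a - 1) * ln x powi b + c * of_int b * x powi (a - 1) * ln x powi (b - 1)) (at x)"
    using assms(1) by (auto intro!: derivative_eq_intros simp: algebra_simps)
  then have "((\<lambda>x. c * (x powi a * ln x powi b) + pp_eval P x) has_real_derivative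
      c * of_int a * x powi (a - 1) * ln x powi b + c * of_int b * x powi (a - 1) * ln x powi (b - 1)
      + pp_eval (pp_deriv P) x) (at x)"
    using Cons by (auto intro: DERIV_add)
  then show ?case
    by (simp add: m pp_eval_def pp_deriv_def mult.assoc add.assoc)
qed

lemma pp_eval_mono:
  assumes "\<forall>(c, a, b) \<in> set P. 0 \<le> b" "0 < t" "\<forall>z \<ge> t. pp_eval (pp_deriv P) z \<ge> 0"
    and "t \<le> x" "x \<le> y"
  shows "pp_eval P x \<le> pp_eval P y"
  using assms(5)
proof (rule DERIV_nonneg_imp_nondecreasing)
  fix z assume "x \<le> z"
  then show "\<exists>d. (pp_eval P has_real_derivative d) (at z) \<and> d \<ge> 0"
    using assms has_real_derivative_pp_eval[of z P] by auto
qed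

lemma pp_eval_antimono:
  assumes "\<forall>(c, a, b) \<in> set P. 0 \<le> b" "0 < t" "\<forall>z \<ge> t. pp_eval (pp_deriv P) z \<le> 0"
    and "t \<le> x" "x \<le> y"
  shows "pp_eval P y \<le> pp_eval P x"
  using assms(5)
proof (rule DERIV_nonpos_imp_nonincreasing)
  fix z assume "x \<le> z"
  then show "\<exists>d. (pp_eval P has_real_derivative d) (at z) \<and> d \<le> 0"
    using assms has_real_derivative_pp_eval[of z P] by auto
qed

lemma pp_deriv_not_eventually_pos:
  assumes exps: "\<forall>(c, a, b) \<in> set P. 0 \<le> a \<and> 0 \<le> b"
    and lim: "lim_top (pp_eval P) \<noteq> \<infinity>"
  shows "\<not> eventually (\<lambda>x. pp_eval (pp_deriv P) x > 0) at_top"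
proof
  assume "eventually (\<lambda>x. pp_eval (pp_deriv P) x > 0) at_top"
  then have "eventually (\<lambda>x. pp_eval (pp_deriv P) x > 0 \<and> 1 \<le> x) at_top"
    by (simp add: eventually_conj_iff)
  then obtain N where "\<forall>x \<ge> N. pp_eval (pp_deriv P) x > 0 \<and> 1 \<le> x"
    unfolding eventually_at_top_linorder by blast
  then have N: "1 \<le> N" "\<forall>x \<ge> N. pp_eval (pp_deriv P) x > 0"
    by auto
  have bs: "\<forall>(c, a, b) \<in> set P. 0 \<le> b"
    using exps by auto
  consider C where "\<forall>x. pp_eval P x = C" | "filterlim (pp_eval P) at_top at_top"
    | "filterlim (pp_eval P) at_bot at_top"
    using pp_eval_nonneg_exponents_cases[OF exps] by blast
  then show False
  proof cases
    case 1
    then have "pp_eval P = (\<lambda>_. C)"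
      by auto
    then have "((\<lambda>_. C) has_real_derivative pp_eval (pp_deriv P) N) (at N)"
      using has_real_derivative_pp_eval[of N P] N(1) bs by simp
    then have "pp_eval (pp_deriv P) N = 0"
      using DERIV_const DERIV_unique by blast
    then show False
      using N by auto
  next
    case 2
    then have "lim_top (pp_eval P) = \<infinity>"
      by (intro lim_top_eqI) (simp add: ereal_tendsto_infinity_iff)
    then show False
      using lim by simp
  next
    case 3
    have "\<forall>z \<ge> N. pp_eval (pp_deriv P) z \<ge> 0"
      using N(2) by (simp add: less_imp_le)
    note mono = pp_eval_mono[OF bs _ this order_refl]
    have "eventually (\<lambda>x. pp_eval P x < pp_eval P N) at_top"
      using 3 by (simp add: filterlim_at_bot_dense)
    moreover have "eventually (\<lambda>x. N \<le> x) at_top"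
      by simp
    ultimately have "eventually (\<lambda>_::real. False) at_top"
      by eventually_elim (use mono N(1) in force)
    then show False
      by simp
  qed
qed

lemma pp_deriv_nonpos_beyond_int:
  assumes "\<forall>(c, a, b) \<in> set P. 0 \<le> a \<and> 0 \<le> b" "lim_top (pp_eval P) \<noteq> \<infinity>"
  shows "\<exists>T::int. \<forall>x \<ge> real_of_int T. pp_eval (pp_deriv P) x \<le> 0"
proof -
  have "eventually (\<lambda>x. pp_eval (pp_deriv P) x \<le> 0) at_top"
    using pp_eval_eventually_sign[of "pp_deriv P"] pp_deriv_not_eventually_pos[OF assms]
    by (auto elim: eventually_mono)
  then obtain N where "\<forall>x \<ge> N. pp_eval (pp_deriv P) x \<le> 0"
    unfolding eventually_at_top_linorder by blast
  then show ?thesis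
    by (intro exI[of _ "\<lceil>N\<rceil>"]) (meson le_of_int_ceiling order_trans)
qed

lemma pp_eval_antimono_beyond_negativeLB:
  fixes T :: int and x y :: real
  assumes "negativeLB_spec NLB"
    and "\<forall>(c, a, b) \<in> set P. 0 \<le> a \<and> 0 \<le> b" "lim_top (pp_eval P) \<noteq> \<infinity>"
    and "0 < T" "NLB (pp_deriv P) \<le> T" "real_of_int T \<le> x" "x \<le> y"
  shows "pp_eval P y \<le> pp_eval P x"
proof -
  have "\<forall>z \<ge> real_of_int (NLB (pp_deriv P)). pp_eval (pp_deriv P) z \<le> 0"
    using assms(1) pp_deriv_nonpos_beyond_int[OF assms(2,3)]
    unfolding negativeLB_spec_def by blast
  then have "\<forall>z \<ge> real_of_int T. pp_eval (pp_deriv P) z \<le> 0"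
    using assms(5) by force
  then show ?thesis
    using pp_eval_antimono[of P "real_of_int T"] assms by force
qed

definition decide_delta :: "int \<Rightarrow> pp \<Rightarrow> pp \<Rightarrow> ereal" where
  "decide_delta n f g = lim_top (\<lambda>\<alpha>. pp_eval f \<alpha> + pp_eval g (real_of_int n))"

definition QL_limit :: "(real \<times> pp \<times> pp) list \<Rightarrow> int \<Rightarrow> real" where
  "QL_limit inp n = (\<Sum>(\<gamma>, f, g) \<leftarrow> inp. \<gamma> * ereal_exp (decide_delta n f g))"

lemma ereal_exp_nonneg: "0 \<le> ereal_exp d"
  by (cases d) (simp_all add: ereal_exp_def)

lemma QL_limit_nonneg: "\<forall>(\<gamma>, f, g) \<in> set inp. 0 \<le> \<gamma> \<Longrightarrow> 0 \<le> QL_limit inp n"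
  unfolding QL_limit_def
  by (induction inp) (auto intro!: add_nonneg_nonneg mult_nonneg_nonneg ereal_exp_nonneg)

lemma decide_inner_iff:
  assumes "R < 1" "\<forall>(\<gamma>, f, g) \<in> set l. 0 \<le> \<gamma>"
  shows "decide_inner n R l \<longleftrightarrow>
    (\<forall>(\<gamma>, f, g) \<in> set l. decide_delta n f g \<noteq> \<infinity>) \<and> R + QL_limit l n < 1"
  using assms
proof (induction l arbitrary: R)
  case Nil
  then show ?case by (simp add: QL_limit_def)
next
  case (Cons m l)
  obtain \<gamma> f g where m: "m = (\<gamma>, f, g)" by (cases m)
  let ?R = "R + \<gamma> * ereal_exp (decide_delta n f g)"
  have "0 \<le> QL_limit l n"
    using Cons.prems(2) by (intro QL_limit_nonneg) auto
  then have "?R + QL_limit l n < 1 \<longleftrightarrow> ?R < 1 \<and> ?R + QL_limit l n < 1"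
    by auto
  then show ?case
    using Cons.IH[of ?R] Cons.prems
    by (auto simp: m QL_limit_def Let_def add.assoc simp flip: decide_delta_def)
qed

lemma decide_step1_eq_None_iff:
  "decide_step1 NLB T l = None \<longleftrightarrow> (\<exists>(\<gamma>, f, g) \<in> set l. lim_top (pp_eval g) = \<infinity>)"
  by (induction NLB T l rule: decide_step1.induct) auto

lemma decide_step1_SomeD:
  "decide_step1 NLB T l = Some T' \<Longrightarrow> T \<le> T' \<and> (\<forall>(\<gamma>, f, g) \<in> set l. NLB (pp_deriv g) \<le> T')"
  by (induction NLB T l rule: decide_step1.induct) (fastforce split: if_splits)+

lemma tendsto_exp_ereal_exp:
  assumes "((\<lambda>x. ereal (h x)) \<longlongrightarrow> l) F" "l \<noteq> \<infinity>"
  shows "((\<lambda>x. exp (h x)) \<longlongrightarrow> ereal_exp l) F"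
proof (cases l)
  case (real r)
  then show ?thesis
    using assms(1) by (simp add: ereal_exp_def tendsto_exp)
next
  case PInf
  then show ?thesis
    using assms(2) by simp
next
  case MInf
  then have "filterlim h at_bot F"
    using assms(1) by (simp add: ereal_tendsto_infinity_iff)
  then show ?thesis
    using MInf by (simp add: ereal_exp_def filterlim_compose[OF exp_at_bot])
qed

lemma tendsto_decide_delta:
  "((\<lambda>\<alpha>. ereal (pp_eval f \<alpha> + pp_eval g (real_of_int n))) \<longlongrightarrow> decide_delta n f g) at_top"
proof -
  let ?C = "pp_eval g (real_of_int n)"
  have "pp_eval (f @ [(?C, 0, 0)]) = (\<lambda>\<alpha>. pp_eval f \<alpha> + ?C)"
    by (simp add: pp_eval_def fun_eq_iff)
  then show ?thesis
    using pp_eval_tendsto_lim_top[of "f @ [(?C, 0, 0)]"] by (simp add: decide_delta_def)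
qed

lemma tendsto_QL_at_top:
  assumes "\<forall>(\<gamma>, f, g) \<in> set inp. decide_delta n f g \<noteq> \<infinity>"
  shows "((\<lambda>\<alpha>. QL inp \<alpha> n) \<longlongrightarrow> QL_limit inp n) at_top"
  using assms unfolding QL_def QL_limit_def
proof (induction inp)
  case (Cons m inp)
  obtain \<gamma> f g where m: "m = (\<gamma>, f, g)" by (cases m)
  have "((\<lambda>\<alpha>. \<gamma> * exp (pp_eval f \<alpha> + pp_eval g (real_of_int n)))
      \<longlongrightarrow> \<gamma> * ereal_exp (decide_delta n f g)) at_top"
    using Cons.prems m by (intro tendsto_mult_left tendsto_exp_ereal_exp[OF tendsto_decide_delta]) auto
  then show ?case
    using Cons by (auto simp: m intro: tendsto_add)
qed simp

lemma summand_le_QL: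
  assumes "\<forall>(\<gamma>, f, g) \<in> set inp. 0 \<le> \<gamma>" "(\<gamma>, f, g) \<in> set inp"
  shows "\<gamma> * exp (pp_eval f \<alpha> + pp_eval g (real_of_int n)) \<le> QL inp \<alpha> n"
  unfolding QL_def using assms by (intro member_le_sum_list) force+

lemma QL_mono_in_n:
  assumes "\<forall>(\<gamma>, f, g) \<in> set inp. 0 \<le> \<gamma> \<and> pp_eval g (real_of_int n) \<le> pp_eval g (real_of_int m)"
  shows "QL inp \<alpha> n \<le> QL inp \<alpha> m"
  using assms unfolding QL_def by (induction inp) (auto intro!: add_mono mult_left_mono)

lemma eventually_mult_exp_gt_1:
  fixes h :: "'a \<Rightarrow> real"
  assumes "0 < \<gamma>" "filterlim h at_top F"
  shows "eventually (\<lambda>x. 1 < \<gamma> * exp (h x)) F"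
proof -
  have "filterlim (\<lambda>x. \<gamma> * exp (h x)) at_top F"
    by (rule filterlim_tendsto_pos_mult_at_top[OF tendsto_const assms(1)])
      (rule filterlim_compose[OF exp_at_top assms(2)])
  then show ?thesis
    by (simp add: filterlim_at_top_dense)
qed

lemma QL_eventually_less_1_if_Decide:
  assumes nlb: "negativeLB_spec NLB" and cp: "1 \<le> cp"
    and gamma: "\<forall>(\<gamma>, f, g) \<in> set inp. 0 \<le> \<gamma>"
    and exps: "\<forall>(\<gamma>, f, g) \<in> set inp. \<forall>(c, a, b) \<in> set g. 0 \<le> a \<and> 0 \<le> b"
    and dec: "Decide NLB cp inp"
  shows "\<exists>\<alpha>0. \<forall>\<alpha> \<ge> \<alpha>0. \<forall>n \<ge> cp. QL inp \<alpha> n < 1"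
proof -
  obtain T where T: "decide_step1 NLB cp inp = Some T"
    and inner: "\<forall>m \<in> {cp..T}. decide_inner m 0 inp"
    using dec by (auto simp: Decide_def split: option.splits)
  have "cp \<le> T" and NLB_le: "\<forall>(\<gamma>, f, g) \<in> set inp. NLB (pp_deriv g) \<le> T"
    using decide_step1_SomeD[OF T] by auto
  have antimono: "pp_eval g (real_of_int n) \<le> pp_eval g (real_of_int T)"
    if g: "(\<gamma>, f, g) \<in> set inp" and "T \<le> n" for \<gamma> f g n
  proof (rule pp_eval_antimono_beyond_negativeLB[OF nlb, where T = T])
    show "lim_top (pp_eval g) \<noteq> \<infinity>"
      using T g decide_step1_eq_None_iff[of NLB cp inp] by auto
  qed (use g exps NLB_le \<open>cp \<le> T\<close> cp \<open>T \<le> n\<close> in auto)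
  have QL_le: "QL inp \<alpha> n \<le> QL inp \<alpha> (min n T)" for \<alpha> n
    using gamma antimono by (intro QL_mono_in_n) (auto simp: min_def)
  have "eventually (\<lambda>\<alpha>. QL inp \<alpha> m < 1) at_top" if "m \<in> {cp..T}" for m
  proof -
    have "(\<forall>(\<gamma>, f, g) \<in> set inp. decide_delta m f g \<noteq> \<infinity>) \<and> QL_limit inp m < 1"
      using inner that decide_inner_iff[of 0 inp m] gamma by auto
    then show ?thesis
      using tendsto_QL_at_top order_tendstoD(2) by blast
  qed
  then have "eventually (\<lambda>\<alpha>. \<forall>m \<in> {cp..T}. QL inp \<alpha> m < 1) at_top"
    by (intro eventually_ball_finite) auto
  then obtain \<alpha>0 where \<alpha>0: "\<forall>\<alpha> \<ge> \<alpha>0. \<forall>m \<in> {cp..T}. QL inp \<alpha> m < 1"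
    unfolding eventually_at_top_linorder by blast
  show ?thesis
  proof (intro exI allI impI)
    fix \<alpha> n assume "\<alpha>0 \<le> \<alpha>" "cp \<le> n"
    then have "QL inp \<alpha> (min n T) < 1"
      using \<alpha>0 \<open>cp \<le> T\<close> by auto
    then show "QL inp \<alpha> n < 1"
      using QL_le by (rule le_less_trans[rotated])
  qed
qed

lemma lim_top_ne_PInf_if_QL_less_1:
  assumes gamma: "\<forall>(\<gamma>, f, g) \<in> set inp. 0 < \<gamma>"
    and bound: "\<forall>n \<ge> cp. QL inp \<alpha> n < 1"
    and g: "(\<gamma>, f, g) \<in> set inp"
  shows "lim_top (pp_eval g) \<noteq> \<infinity>"
proof
  assume "lim_top (pp_eval g) = \<infinity>"
  then have "filterlim (pp_eval g) at_top at_top"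
    using pp_eval_tendsto_lim_top[of g] by (simp add: ereal_tendsto_infinity_iff)
  then have "filterlim (\<lambda>n. pp_eval f \<alpha> + pp_eval g (real_of_int n)) at_top at_top"
    by (intro filterlim_tendsto_add_at_top[OF tendsto_const]
        filterlim_compose[OF _ filterlim_real_of_int_at_top])
  then have "eventually (\<lambda>n. 1 < \<gamma> * exp (pp_eval f \<alpha> + pp_eval g (real_of_int n)) \<and> cp \<le> n) at_top"
    using gamma g by (auto intro!: eventually_conj eventually_mult_exp_gt_1)
  then obtain n where "1 < \<gamma> * exp (pp_eval f \<alpha> + pp_eval g (real_of_int n))" "cp \<le> n"
    unfolding eventually_at_top_linorder by (metis order_refl)
  then show False
    using summand_le_QL[of inp \<gamma> f g \<alpha> n] gamma g bound by fastforce
qed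

lemma decide_delta_ne_PInf_if_QL_less_1:
  assumes gamma: "\<forall>(\<gamma>, f, g) \<in> set inp. 0 < \<gamma>"
    and bound: "\<forall>\<alpha> \<ge> \<alpha>0. QL inp \<alpha> n < 1"
    and g: "(\<gamma>, f, g) \<in> set inp"
  shows "decide_delta n f g \<noteq> \<infinity>"
proof
  assume "decide_delta n f g = \<infinity>"
  then have "filterlim (\<lambda>\<alpha>. pp_eval f \<alpha> + pp_eval g (real_of_int n)) at_top at_top"
    using tendsto_decide_delta[of f g n] by (simp add: ereal_tendsto_infinity_iff)
  then have "eventually (\<lambda>\<alpha>. 1 < \<gamma> * exp (pp_eval f \<alpha> + pp_eval g (real_of_int n)) \<and> \<alpha>0 \<le> \<alpha>) at_top"
    using gamma g by (auto intro!: eventually_conj eventually_mult_exp_gt_1)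
  then obtain \<alpha> where "1 < \<gamma> * exp (pp_eval f \<alpha> + pp_eval g (real_of_int n))" "\<alpha>0 \<le> \<alpha>"
    unfolding eventually_at_top_linorder by (metis order_refl)
  then show False
    using summand_le_QL[of inp \<gamma> f g \<alpha> n] gamma g bound by fastforce
qed

lemma Decide_if_QL_le_1_minus:
  assumes gamma: "\<forall>(\<gamma>, f, g) \<in> set inp. 0 < \<gamma>" and "0 < \<epsilon>"
    and bound: "\<forall>\<alpha> \<ge> \<alpha>0. \<forall>n \<ge> cp. QL inp \<alpha> n \<le> 1 - \<epsilon>"
  shows "Decide NLB cp inp"
proof -
  have less_1: "QL inp \<alpha> n < 1" if "\<alpha>0 \<le> \<alpha>" "cp \<le> n" for \<alpha> n
    using bound that \<open>0 < \<epsilon>\<close> by fastforce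
  obtain T where T: "decide_step1 NLB cp inp = Some T"
    using lim_top_ne_PInf_if_QL_less_1[OF gamma] less_1 decide_step1_eq_None_iff[of NLB cp inp]
    by fastforce
  have "decide_inner m 0 inp" if "cp \<le> m" for m
  proof -
    have delta: "\<forall>(\<gamma>, f, g) \<in> set inp. decide_delta m f g \<noteq> \<infinity>"
      using decide_delta_ne_PInf_if_QL_less_1[OF gamma] less_1 \<open>cp \<le> m\<close> by fastforce
    then have "((\<lambda>\<alpha>. QL inp \<alpha> m) \<longlongrightarrow> QL_limit inp m) at_top"
      by (rule tendsto_QL_at_top)
    moreover have "eventually (\<lambda>\<alpha>. QL inp \<alpha> m \<le> 1 - \<epsilon>) at_top"
      using bound \<open>cp \<le> m\<close> unfolding eventually_at_top_linorder by blast
    ultimately have "QL_limit inp m \<le> 1 - \<epsilon>"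
      by (rule tendsto_upperbound) simp
    then show ?thesis
      using delta decide_inner_iff[of 0 inp m] gamma \<open>0 < \<epsilon>\<close> by fastforce
  qed
  then show ?thesis
    using T by (simp add: Decide_def)
qed

theorem mainTheorem1:
  fixes NLB :: "pp \<Rightarrow> int" and cp :: int and inp :: "(real \<times> pp \<times> pp) list"
  assumes nlb_spec: "negativeLB_spec NLB"
    and cp: "cp \<ge> 1"
    and k: "inp \<noteq> []"
    and gamma_pos: "\<forall>(\<gamma>, f, g) \<in> set inp. \<gamma> > 0"
    and g_exps: "\<forall>(\<gamma>, f, g) \<in> set inp. \<forall>(c, a, b) \<in> set g. a \<ge> 0 \<and> b \<ge> 0"
  shows "((\<forall>\<alpha>0. \<exists>\<alpha> \<ge> \<alpha>0. \<exists>n::int. n \<ge> cp \<and> QL inp \<alpha> n > 1) \<longrightarrow> \<not> Decide NLB cp inp)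
       \<and> (\<forall>\<epsilon>>0. (\<exists>\<alpha>0. \<forall>\<alpha> \<ge> \<alpha>0. \<forall>n::int. n \<ge> cp \<longrightarrow> QL inp \<alpha> n \<le> 1 - \<epsilon>)
               \<longrightarrow> Decide NLB cp inp)"
proof (intro conjI impI allI)
  assume unbounded: "\<forall>\<alpha>0. \<exists>\<alpha> \<ge> \<alpha>0. \<exists>n::int. n \<ge> cp \<and> QL inp \<alpha> n > 1"
  have "\<forall>(\<gamma>, f, g) \<in> set inp. 0 \<le> \<gamma>"
    using gamma_pos by fastforce
  then show "\<not> Decide NLB cp inp"
    using QL_eventually_less_1_if_Decide[OF nlb_spec cp _ g_exps] unbounded by force
next
  fix \<epsilon> :: real
  assume "\<epsilon> > 0" "\<exists>\<alpha>0. \<forall>\<alpha> \<ge> \<alpha>0. \<forall>n::int. n \<ge> cp \<longrightarrow> QL inp \<alpha> n \<le> 1 - \<epsilon>"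
  then show "Decide NLB cp inp"
    using Decide_if_QL_le_1_minus[OF gamma_pos] by blast
qed

end
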